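(* Let $k\ge2$, $\sigma_i=\frac{i(k-i)}2$ for $i=0,\dots,k$, and let $M=(m_{i,j})_{1\le i,j\le k}$ be the symmetric tridiagonal matrix with $m_{i,i-1}=\sigma_{i-1}$, $m_{i,i}=-(\sigma_{i-1}+\sigma_i)$, $m_{i,i+1}=\sigma_i$ and $m_{i,j}=0$ if $|i-j|\ge2$. Then $M$ is diagonalizable with real eigenvalues $-m_i=-\frac{i(i-1)}2$, $i=1,\dots,k$, and an eigenvector for the eigenvalue $-m_1=0$ is $(1,\dots,1)^t$. *)

theory Defs
  imports "Jordan_Normal_Form.Matrix" "Jordan_Normal_Form.Char_Poly"
begin

definition sigma :: "nat \<Rightarrow> nat \<Rightarrow> real" where
  "sigma k i = real i * (real k - real i) / 2"

text \<open>Entries m_{i,j} of the paper, with 1-based indices 1 <= i,j <= k.\<close>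
definition m_entry :: "nat \<Rightarrow> nat \<Rightarrow> nat \<Rightarrow> real" where
  "m_entry k i j =
     (if j + 1 = i then sigma k (i - 1)
      else if i = j then - (sigma k (i - 1) + sigma k i)
      else if j = i + 1 then sigma k i
      else 0)"

text \<open>The k x k matrix M; JNF matrices are 0-indexed, so entry (a,b) is m_{a+1,b+1}.\<close>
definition Mmat :: "nat \<Rightarrow> real mat" where
  "Mmat k = mat k k (\<lambda>(a, b). m_entry k (a + 1) (b + 1))"

definition mval :: "nat \<Rightarrow> real" where
  "mval i = real i * (real i - 1) / 2"

end

theory Submission
  imports Defs
begin

text \<open>
  The Pascal matrix \<open>P = (i choose j)\<close> conjugates \<open>M\<close> into an upper bidiagonal matrix
  with diagonal \<open>-m\<^sub>1, \<dots>, -m\<^sub>k\<close> and superdiagonal \<open>\<sigma>\<^sub>1, \<dots>, \<sigma>\<^sub>k\<^sub>-\<^sub>1\<close>: applying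
  \<open>M\<close> to the column \<open>a \<mapsto> (a choose j)\<close> gives, by a three-term binomial identity,
  \<open>-m\<^sub>j\<^sub>+\<^sub>1\<close> times that column plus \<open>\<sigma>\<^sub>j\<close> times the previous one. As the \<open>m\<^sub>i\<close>
  are pairwise distinct, a bidiagonal matrix is diagonalised by back substitution
  with an upper unitriangular matrix. The constant vector is the first column of \<open>P\<close>.
\<close>

lemma index_mult_mat_sum:
  assumes "A \<in> carrier_mat m n" "B \<in> carrier_mat n p" "i < m" "j < p"
  shows "(A * B) $$ (i, j) = (\<Sum>c<n. A $$ (i, c) * B $$ (c, j))"
  using assms by (auto simp: scalar_prod_def atLeast0LessThan intro!: sum.cong)

lemma similar_mat_if_mult_eq:
  fixes A B P :: "'a :: field mat"
  assumes "A \<in> carrier_mat n n" "B \<in> carrier_mat n n" "P \<in> carrier_mat n n"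
    and "det P \<noteq> 0" and "A * P = P * B"
  shows "similar_mat A B"
proof -
  from det_non_zero_imp_unit[OF assms(3,4), of "()"]
  obtain Q where Q: "Q \<in> carrier_mat n n" "Q * P = 1\<^sub>m n" "P * Q = 1\<^sub>m n"
    unfolding Units_def ring_mat_def by auto
  have "A = A * (P * Q)" using assms(1) Q(3) by simp
  also have "\<dots> = P * B * Q"
    using assms Q by (metis assoc_mult_mat)
  finally show ?thesis using assms Q by (intro similar_matI) auto
qed

definition upper_bidiag_mat :: "nat \<Rightarrow> (nat \<Rightarrow> 'a) \<Rightarrow> (nat \<Rightarrow> 'a) \<Rightarrow> 'a :: zero mat" where
  "upper_bidiag_mat n d s = mat n n (\<lambda>(i, j). if i = j then d i else if j = i + 1 then s i else 0)"

lemma upper_bidiag_mat_carrier [simp]: "upper_bidiag_mat n d s \<in> carrier_mat n n"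
  by (simp add: upper_bidiag_mat_def)

lemma index_mult_upper_bidiag_mat:
  fixes A :: "'a :: semiring_0 mat"
  assumes "A \<in> carrier_mat m n" "i < m" "j < n"
  shows "(A * upper_bidiag_mat n d s) $$ (i, j) =
    A $$ (i, j) * d j + (if 0 < j then A $$ (i, j - 1) * s (j - 1) else 0)"
proof -
  have "(A * upper_bidiag_mat n d s) $$ (i, j) =
      (\<Sum>c<n. (if c = j then A $$ (i, j) * d j else 0) +
              (if c = j - 1 \<and> 0 < j then A $$ (i, j - 1) * s (j - 1) else 0))"
    using assms by (subst index_mult_mat_sum[of _ m n _ n]) (auto simp: upper_bidiag_mat_def intro!: sum.cong)
  also have "\<dots> = A $$ (i, j) * d j + (if 0 < j then A $$ (i, j - 1) * s (j - 1) else 0)"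
    using assms(3) by (auto simp: sum.distrib)
  finally show ?thesis .
qed

lemma index_upper_bidiag_mat_mult:
  fixes B :: "'a :: semiring_0 mat"
  assumes "B \<in> carrier_mat n m" "i < n" "j < m"
  shows "(upper_bidiag_mat n d s * B) $$ (i, j) =
    d i * B $$ (i, j) + (if i + 1 < n then s i * B $$ (i + 1, j) else 0)"
proof -
  have "(upper_bidiag_mat n d s * B) $$ (i, j) =
      (\<Sum>c<n. (if c = i then d i * B $$ (i, j) else 0) +
              (if c = i + 1 then s i * B $$ (i + 1, j) else 0))"
    using assms by (subst index_mult_mat_sum[of _ n n _ m]) (auto simp: upper_bidiag_mat_def intro!: sum.cong)
  also have "\<dots> = d i * B $$ (i, j) + (if i + 1 < n then s i * B $$ (i + 1, j) else 0)"
    using assms(2) by (simp add: sum.distrib)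
  finally show ?thesis .
qed

text \<open>Column \<open>j\<close> solves \<open>(T - d\<^sub>j) u = 0\<close> by back substitution from \<open>u\<^sub>j = 1\<close>,
  i.e. \<open>u\<^sub>i = s\<^sub>i u\<^sub>i\<^sub>+\<^sub>1 / (d\<^sub>j - d\<^sub>i)\<close>.\<close>

definition bidiag_eigenbasis :: "nat \<Rightarrow> (nat \<Rightarrow> 'a) \<Rightarrow> (nat \<Rightarrow> 'a) \<Rightarrow> 'a :: field mat" where
  "bidiag_eigenbasis n d s =
     mat n n (\<lambda>(i, j). if i \<le> j then \<Prod>c = i..<j. s c / (d j - d c) else 0)"

lemma bidiag_eigenbasis_carrier [simp]: "bidiag_eigenbasis n d s \<in> carrier_mat n n"
  by (simp add: bidiag_eigenbasis_def)

lemma det_bidiag_eigenbasis: "det (bidiag_eigenbasis n d s) = 1"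
  by (subst det_upper_triangular)
    (auto simp: upper_triangular_def bidiag_eigenbasis_def prod_list_diag_prod)

lemma upper_bidiag_mat_mult_eigenbasis:
  fixes d s :: "nat \<Rightarrow> 'a :: field"
  assumes "inj_on d {..<n}"
  shows "upper_bidiag_mat n d s * bidiag_eigenbasis n d s =
         bidiag_eigenbasis n d s * mat_diag n d" (is "?T * ?E = _")
proof (rule eq_matI)
  fix i j assume "i < dim_row (?E * mat_diag n d)" "j < dim_col (?E * mat_diag n d)"
  then have i: "i < n" and j: "j < n" by (auto simp: bidiag_eigenbasis_def mat_diag_def)
  have "d i * ?E $$ (i, j) + (if i + 1 < n then s i * ?E $$ (i + 1, j) else 0) = ?E $$ (i, j) * d j"
  proof (cases "i < j")
    case True
    have "d j \<noteq> d i" using assms True i j by (metis inj_onD lessThan_iff less_irrefl)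
    moreover have "?E $$ (i, j) = s i / (d j - d i) * ?E $$ (i + 1, j)"
      using True j by (simp add: bidiag_eigenbasis_def prod.atLeast_Suc_lessThan)
    ultimately show ?thesis using True j by (simp add: field_simps)
  qed (use i j in \<open>auto simp: bidiag_eigenbasis_def\<close>)
  then show "(?T * ?E) $$ (i, j) = (?E * mat_diag n d) $$ (i, j)"
    using i j by (simp add: index_upper_bidiag_mat_mult[of _ n n] mat_diag_mult_right[of _ n n])
qed (auto simp: upper_bidiag_mat_def bidiag_eigenbasis_def mat_diag_def)

lemma similar_mat_upper_bidiag_mat_diag:
  fixes d s :: "nat \<Rightarrow> 'a :: field"
  assumes "inj_on d {..<n}"
  shows "similar_mat (upper_bidiag_mat n d s) (mat_diag n d)"
  by (rule similar_mat_if_mult_eq[OF _ _ bidiag_eigenbasis_carrier[of n d s]])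
    (auto simp: det_bidiag_eigenbasis upper_bidiag_mat_mult_eigenbasis[OF assms])

definition pascal_mat :: "nat \<Rightarrow> 'a :: semiring_1 mat" where
  "pascal_mat n = mat n n (\<lambda>(i, j). of_nat (i choose j))"

lemma pascal_mat_carrier [simp]: "pascal_mat n \<in> carrier_mat n n"
  by (simp add: pascal_mat_def)

lemma det_pascal_mat: "det (pascal_mat n :: 'a :: comm_ring_1 mat) = 1"
  by (subst det_lower_triangular[of n])
    (auto simp: pascal_mat_def prod_list_diag_prod binomial_eq_0)

lemma dim_Mmat [simp]: "dim_row (Mmat k) = k" "dim_col (Mmat k) = k"
  by (simp_all add: Mmat_def)

lemma Mmat_carrier [simp]: "Mmat k \<in> carrier_mat k k"
  by (simp add: carrier_matI)

lemma Mmat_row_sum: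
  assumes "a < k"
  shows "(\<Sum>b<k. Mmat k $$ (a, b) * f b) =
    sigma k a * (f (a - 1) - f a) + sigma k (a + 1) * (f (a + 1) - f a)"
proof -
  have "(\<Sum>b<k. Mmat k $$ (a, b) * f b) =
     (\<Sum>b<k. (if b = a - 1 \<and> 0 < a then sigma k a * f b else 0) +
             (if b = a then - (sigma k a + sigma k (a + 1)) * f b else 0) +
             (if b = a + 1 then sigma k (a + 1) * f b else 0))"
    using assms by (intro sum.cong) (auto simp: Mmat_def m_entry_def)
  moreover have "sigma k 0 = 0" "sigma k k = 0" by (auto simp: sigma_def)
  ultimately show ?thesis
    using assms by (cases "a = 0"; cases "a + 1 = k") (auto simp: sum.distrib algebra_simps)
qed

text \<open>For \<open>d = 0\<close> the junk value \<open>a choose (0 - 1) = 1\<close> is harmless, as \<open>sigma k 0 = 0\<close>.\<close>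

lemma sigma_binomial_identity:
  "sigma k a * (real ((a - 1) choose d) - real (a choose d))
     + sigma k (a + 1) * (real ((a + 1) choose d) - real (a choose d))
   = - mval (d + 1) * real (a choose d) + sigma k d * real (a choose (d - 1))"
proof (cases d)
  case 0
  then show ?thesis by (simp add: sigma_def mval_def)
next
  case (Suc e)
  define x c where "x = real (a choose d)" and "c = real (a choose e)"
  have lower: "sigma k a * (real ((a - 1) choose d) - x) = - (real k - real a) * real d * x / 2"
  proof (cases a)
    case (Suc a')
    have absorb_lower: "real a * real (a' choose e) = real d * x"
      using Suc_times_binomial_eq[of a' e, THEN arg_cong[where f = real]]
      by (simp add: Suc \<open>d = Suc e\<close> x_def algebra_simps)
    have "real ((a - 1) choose d) - x = - real (a' choose e)"
      by (simp add: Suc \<open>d = Suc e\<close> x_def)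
    then have "sigma k a * (real ((a - 1) choose d) - x) = sigma k a * - real (a' choose e)"
      by (rule arg_cong)
    also have "\<dots> = - (real k - real a) / 2 * (real a * real (a' choose e))"
      by (simp add: sigma_def algebra_simps)
    finally show ?thesis
      by (simp add: absorb_lower)
  qed (simp add: sigma_def x_def \<open>d = Suc e\<close>)
  have step: "real ((a + 1) choose d) - x = c"
    by (simp add: \<open>d = Suc e\<close> x_def c_def)
  have absorb_upper: "(real a + 1) * c = real d * (x + c)"
    using Suc_times_binomial_eq[of a e, THEN arg_cong[where f = real]]
    by (simp add: \<open>d = Suc e\<close> x_def c_def algebra_simps)
  have "- (real k - real a) * real d * x / 2 + sigma k (a + 1) * c
      - (- mval (d + 1) * x + sigma k d * c)
      = (real k - real a - 1 - real d) * ((real a + 1) * c - real d * (x + c)) / 2"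
    by (simp add: sigma_def mval_def field_simps)
  then have "- (real k - real a) * real d * x / 2 + sigma k (a + 1) * c
      = - mval (d + 1) * x + sigma k d * c"
    by (simp add: absorb_upper)
  then show ?thesis
    using lower step by (simp add: x_def c_def \<open>d = Suc e\<close>)
qed

lemma Mmat_mult_pascal_mat:
  "Mmat k * pascal_mat k =
   pascal_mat k * upper_bidiag_mat k (\<lambda>j. - mval (j + 1)) (\<lambda>j. sigma k (j + 1))"
  (is "_ = ?P * ?T")
proof (rule eq_matI)
  fix i j assume "i < dim_row (?P * ?T)" "j < dim_col (?P * ?T)"
  then have i: "i < k" and j: "j < k" by (auto simp: pascal_mat_def upper_bidiag_mat_def)
  have "(Mmat k * ?P) $$ (i, j) = (\<Sum>b<k. Mmat k $$ (i, b) * real (b choose j))"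
    using i j by (subst index_mult_mat_sum[of _ k k _ k]) (simp_all add: pascal_mat_def)
  also have "\<dots> = - mval (j + 1) * real (i choose j) + sigma k j * real (i choose (j - 1))"
    by (simp only: Mmat_row_sum[OF i] sigma_binomial_identity)
  also have "\<dots> = (?P * ?T) $$ (i, j)"
    using i j by (cases j) (simp_all add: index_mult_upper_bidiag_mat[of _ k k] pascal_mat_def sigma_def)
  finally show "(Mmat k * ?P) $$ (i, j) = (?P * ?T) $$ (i, j)" .
qed (auto simp: pascal_mat_def upper_bidiag_mat_def)

lemma Mmat_mult_vec_ones: "Mmat k *\<^sub>v vec k (\<lambda>_. 1) = 0\<^sub>v k"
proof (rule eq_vecI)
  fix i assume "i < dim_vec (0\<^sub>v k :: real vec)"
  then have "i < k" by simp
  then have "(Mmat k *\<^sub>v vec k (\<lambda>_. 1)) $ i = (\<Sum>b<k. Mmat k $$ (i, b) * 1)"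
    by (simp add: scalar_prod_def atLeast0LessThan)
  also have "\<dots> = 0"
    by (simp only: Mmat_row_sum[OF \<open>i < k\<close>]) simp
  finally show "(Mmat k *\<^sub>v vec k (\<lambda>_. 1)) $ i = 0\<^sub>v k $ i"
    using \<open>i < k\<close> by simp
qed simp

lemma strict_mono_mval_Suc: "strict_mono (\<lambda>j. mval (j + 1))"
  unfolding strict_mono_Suc_iff by (simp add: mval_def field_simps)

theorem lemma2p5:
  fixes k :: nat
  assumes "k \<ge> 2"
  shows "similar_mat (Mmat k) (mat_diag k (\<lambda>a. - mval (a + 1)))
         \<and> eigenvector (Mmat k) (vec k (\<lambda>_. 1)) (- mval 1)
         \<and> mval 1 = 0"
proof (intro conjI)
  let ?T = "upper_bidiag_mat k (\<lambda>j. - mval (j + 1)) (\<lambda>j. sigma k (j + 1))"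
  have "similar_mat (Mmat k) ?T"
    by (rule similar_mat_if_mult_eq[OF Mmat_carrier upper_bidiag_mat_carrier pascal_mat_carrier])
      (simp_all add: det_pascal_mat Mmat_mult_pascal_mat)
  moreover have "inj_on (\<lambda>j. - mval (j + 1)) {..<k}"
    using strict_mono_eq[OF strict_mono_mval_Suc] by (intro inj_onI) simp
  ultimately show "similar_mat (Mmat k) (mat_diag k (\<lambda>a. - mval (a + 1)))"
    by (metis similar_mat_trans similar_mat_upper_bidiag_mat_diag)
  show "mval 1 = 0" by (simp add: mval_def)
  moreover have "vec k (\<lambda>_. 1) \<noteq> (0\<^sub>v k :: real vec)"
    using assms by (auto dest!: arg_cong[where f = "\<lambda>v. v $ 0"])
  ultimately show "eigenvector (Mmat k) (vec k (\<lambda>_. 1)) (- mval 1)"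
    using Mmat_mult_vec_ones by (auto simp: eigenvector_def intro!: eq_vecI)
qed

end
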